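(* Let $\mathcal{G}$ be a $k$-uniform hypergraph. Then \[ i(\mathcal{G})\geq\frac{\alpha(\mathcal{G})+\beta(\mathcal{G})}{k}. \]
   Context: A $k$-uniform hypergraph $\mathcal{G}$ has vertex set $V(\mathcal{G})=[n]$ and edge set $E(\mathcal{G})$ of $k$-element subsets of $V(\mathcal{G})$. For $\mathbf{x}\in\mathbb{R}^n$, $\mathcal{L}_\mathcal{G}\mathbf{x}^k=\sum_{\{i_1,\ldots,i_k\}\in E(\mathcal{G})}\left(x_{i_1}^k+\cdots+x_{i_k}^k-k\,x_{i_1}\cdots x_{i_k}\right)$. The inverse Perron value of vertex $j$ is $\alpha_j(\mathcal{G})=\min\{\mathcal{L}_\mathcal{G}\mathbf{x}^k : \mathbf{x}\in\mathbb{R}^n_+,\ \sum_{i=1}^n x_i^k=1,\ x_j=0\}$. Let $\alpha(\mathcal{G})=\min_{j\in V(\mathcal{G})}\alpha_j(\mathcal{G})$ (the analytic connectivity) and $\beta(\mathcal{G})=\max_{j\in V(\mathcal{G})}\alpha_j(\mathcal{G})$. For $S\subseteq V(\mathcal{G})$ with $\overline{S}=V(\mathcal{G})\setminus S$, $E(S,\overline{S})$ is the set of edges containing vertices of both $S$ and $\overline{S}$. The isoperimetric number is $i(\mathcal{G})=\min\{|E(S,\overline{S})|/|S| : S\subseteq V(\mathcal{G}),\ 0<|S|\le |V(\mathcal{G})|/2\}$. *)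

theory Defs
  imports Main "HOL-Analysis.Analysis"
begin

text \<open>A k-uniform hypergraph on vertex set [n] = {1..n} is given by its edge set E,
  a set of k-element subsets of {1..n}. Vectors in R^n are functions nat => real,
  only the coordinates 1..n matter.\<close>

definition uniform_hypergraph :: "nat \<Rightarrow> nat \<Rightarrow> nat set set \<Rightarrow> bool" where
  "uniform_hypergraph n k E \<longleftrightarrow> (\<forall>e\<in>E. e \<subseteq> {1..n} \<and> card e = k)"

definition lap_form :: "nat \<Rightarrow> nat set set \<Rightarrow> (nat \<Rightarrow> real) \<Rightarrow> real" where
  "lap_form k E x = (\<Sum>e\<in>E. (\<Sum>i\<in>e. x i ^ k) - real k * (\<Prod>i\<in>e. x i))"

definition inv_perron :: "nat \<Rightarrow> nat \<Rightarrow> nat set set \<Rightarrow> nat \<Rightarrow> real" where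
  "inv_perron n k E j = Inf {lap_form k E x | x.
      (\<forall>i\<in>{1..n}. 0 \<le> x i) \<and> (\<Sum>i=1..n. x i ^ k) = 1 \<and> x j = 0}"

definition analytic_conn :: "nat \<Rightarrow> nat \<Rightarrow> nat set set \<Rightarrow> real" where
  "analytic_conn n k E = Min ((inv_perron n k E) ` {1..n})"

definition beta_hg :: "nat \<Rightarrow> nat \<Rightarrow> nat set set \<Rightarrow> real" where
  "beta_hg n k E = Max ((inv_perron n k E) ` {1..n})"

definition cut_edges :: "nat \<Rightarrow> nat set set \<Rightarrow> nat set \<Rightarrow> nat set set" where
  "cut_edges n E S = {e\<in>E. e \<inter> S \<noteq> {} \<and> e \<inter> ({1..n} - S) \<noteq> {}}"

definition isoperimetric :: "nat \<Rightarrow> nat set set \<Rightarrow> real" where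
  "isoperimetric n E = Min {real (card (cut_edges n E S)) / real (card S) | S.
      S \<subseteq> {1..n} \<and> 0 < card S \<and> real (card S) \<le> real n / 2}"

end

theory Submission
  imports Defs
begin

text \<open>Testing \<open>\<alpha>\<^sub>j\<close> with the normalised indicator vector of a vertex set \<open>S\<close> not
  containing \<open>j\<close> bounds it by the sum of \<open>|e \<inter> S| / |S|\<close> over the cut edges \<open>e\<close>, since
  only cut edges contribute to the Laplacian form. Doing the same for the complement
  \<open>T\<close> of \<open>S\<close> and a vertex \<open>l \<in> S\<close>, and using \<open>|S| \<le> |T|\<close>, the two bounds add up to
  \<open>k |E(S,T)| / |S|\<close> because every cut edge splits its \<open>k\<close> vertices between \<open>S\<close> and \<open>T\<close>.
  A vertex where \<open>\<beta>\<close> is attained lies on one side; any vertex on the other side has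
  inverse Perron value at least \<open>\<alpha>\<close>.\<close>

definition perron_feasible :: "nat \<Rightarrow> nat \<Rightarrow> nat \<Rightarrow> (nat \<Rightarrow> real) \<Rightarrow> bool" where
  "perron_feasible n k j x \<longleftrightarrow>
     (\<forall>i\<in>{1..n}. 0 \<le> x i) \<and> (\<Sum>i=1..n. x i ^ k) = 1 \<and> x j = 0"

lemma inv_perron_eq_Inf:
  "inv_perron n k E j = Inf (lap_form k E ` Collect (perron_feasible n k j))"
  unfolding inv_perron_def perron_feasible_def by (intro arg_cong[where f = Inf]) auto

lemma uniform_hypergraph_finite:
  assumes "uniform_hypergraph n k E"
  shows "finite E"
proof (rule finite_subset)
  show "E \<subseteq> Pow {1..n}" using assms unfolding uniform_hypergraph_def by auto
qed simp

lemma perron_feasible_le_one: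
  assumes x: "perron_feasible n k j x" and k: "1 \<le> k" and i: "i \<in> {1..n}"
  shows "x i \<le> 1"
proof -
  have nonneg: "\<forall>i\<in>{1..n}. 0 \<le> x i" and total: "(\<Sum>i=1..n. x i ^ k) = 1"
    using x unfolding perron_feasible_def by auto
  have "x i ^ k \<le> (\<Sum>i=1..n. x i ^ k)"
    by (rule member_le_sum) (use i nonneg in auto)
  then have "x i ^ k \<le> 1" using total by simp
  then show ?thesis using power_le_one_iff[of "x i" k] nonneg i k by auto
qed

lemma lap_form_lower_bound:
  assumes u: "uniform_hypergraph n k E" and k: "1 \<le> k" and x: "perron_feasible n k j x"
  shows "- real k * real (card E) \<le> lap_form k E x"
proof -
  have nonneg: "\<forall>i\<in>{1..n}. 0 \<le> x i" using x unfolding perron_feasible_def by auto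
  have "- real k \<le> (\<Sum>i\<in>e. x i ^ k) - real k * (\<Prod>i\<in>e. x i)" if "e \<in> E" for e
  proof -
    have e: "e \<subseteq> {1..n}" using u that unfolding uniform_hypergraph_def by auto
    have "0 \<le> (\<Sum>i\<in>e. x i ^ k)" using e nonneg by (intro sum_nonneg) auto
    moreover have "(\<Prod>i\<in>e. x i) \<le> 1"
      using e nonneg perron_feasible_le_one[OF x k] by (intro prod_le_1) auto
    ultimately show ?thesis using mult_left_le[of "\<Prod>i\<in>e. x i" "real k"] by linarith
  qed
  then have "(\<Sum>e\<in>E. - real k) \<le> lap_form k E x"
    unfolding lap_form_def by (intro sum_mono)
  then show ?thesis by (simp add: mult.commute)
qed

lemma inv_perron_le_lap_form:
  assumes u: "uniform_hypergraph n k E" and k: "1 \<le> k" and x: "perron_feasible n k j x"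
  shows "inv_perron n k E j \<le> lap_form k E x"
proof -
  have "bdd_below (lap_form k E ` Collect (perron_feasible n k j))"
    using lap_form_lower_bound[OF u k] by (intro bdd_belowI) auto
  then show ?thesis unfolding inv_perron_eq_Inf using x by (intro cInf_lower) auto
qed

text \<open>Edges inside \<open>S\<close> contribute \<open>k c\<^sup>k - k c\<^sup>k = 0\<close>, edges outside \<open>S\<close> contribute
  nothing, and a cut edge has a zero coordinate, so only its power sum survives.\<close>

lemma lap_form_indicator:
  assumes u: "uniform_hypergraph n k E"
  shows "lap_form k E (\<lambda>i. if i \<in> S then c else 0)
    = c ^ k * (\<Sum>e\<in>cut_edges n E S. real (card (e \<inter> S)))"
proof -
  let ?x = "\<lambda>i. if i \<in> S then c else 0"
  have edge_term: "(\<Sum>i\<in>e. ?x i ^ k) - real k * (\<Prod>i\<in>e. ?x i)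
      = (if e \<in> cut_edges n E S then c ^ k * real (card (e \<inter> S)) else 0)"
    if e: "e \<in> E" for e
  proof -
    have sub: "e \<subseteq> {1..n}" and card_e: "card e = k"
      using u e unfolding uniform_hypergraph_def by auto
    have fin: "finite e" using sub finite_subset by blast
    have power_sum: "(\<Sum>i\<in>e. ?x i ^ k) = c ^ k * real (card (e \<inter> S))"
    proof (cases "k = 0")
      case False
      then have "(\<Sum>i\<in>e. ?x i ^ k) = (\<Sum>i\<in>e. if i \<in> S then c ^ k else 0)"
        by (intro sum.cong) auto
      also have "\<dots> = (\<Sum>i\<in>e \<inter> S. c ^ k)" by (rule sum.inter_restrict[OF fin, symmetric])
      finally show ?thesis by (simp add: mult.commute)
    qed (use card_e fin in auto)
    show ?thesis
    proof (cases "e \<subseteq> S")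
      case True
      then have "(\<Prod>i\<in>e. ?x i) = c ^ k" using card_e by (simp add: subset_eq)
      moreover have "e \<inter> S = e" and "e \<notin> cut_edges n E S"
        using True by (auto simp: cut_edges_def)
      ultimately show ?thesis using power_sum card_e by simp
    next
      case False
      then obtain i where "i \<in> e" "i \<notin> S" by auto
      then have "(\<Prod>i\<in>e. ?x i) = 0" and "e \<inter> ({1..n} - S) \<noteq> {}"
        using fin sub by (auto intro: prod_zero)
      then show ?thesis using power_sum e by (auto simp: cut_edges_def)
    qed
  qed
  have "lap_form k E ?x = (\<Sum>e\<in>E. if e \<in> cut_edges n E S then c ^ k * real (card (e \<inter> S)) else 0)"
    unfolding lap_form_def using edge_term by (intro sum.cong) auto
  also have "\<dots> = (\<Sum>e\<in>cut_edges n E S. c ^ k * real (card (e \<inter> S)))"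
    using uniform_hypergraph_finite[OF u]
    by (simp add: sum.If_cases cut_edges_def Int_def)
  finally show ?thesis by (simp add: sum_distrib_left)
qed

lemma inv_perron_le_cut_sum:
  assumes u: "uniform_hypergraph n k E" and k: "1 \<le> k"
    and S: "S \<subseteq> {1..n}" "S \<noteq> {}" and j: "j \<notin> S"
  shows "inv_perron n k E j \<le> (\<Sum>e\<in>cut_edges n E S. real (card (e \<inter> S))) / real (card S)"
proof -
  have card_pos: "0 < real (card S)" using S finite_subset by fastforce
  define c where "c = root k (1 / real (card S))"
  have c_pos: "0 < c" using card_pos k unfolding c_def by simp
  have c_pow: "c ^ k = 1 / real (card S)"
    unfolding c_def using k card_pos by (intro real_root_pow_pos) auto
  let ?x = "\<lambda>i. if i \<in> S then c else 0"
  have "(\<Sum>i=1..n. ?x i ^ k) = (\<Sum>i=1..n. if i \<in> S then c ^ k else 0)"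
    using k by (intro sum.cong) auto
  also have "\<dots> = (\<Sum>i\<in>S. c ^ k)"
    using sum.inter_restrict[of "{1..n}" "\<lambda>i. c ^ k" S] Int_absorb1[OF S(1)] by simp
  also have "\<dots> = 1" using c_pow card_pos by simp
  finally have "perron_feasible n k j ?x"
    unfolding perron_feasible_def using c_pos j by auto
  then have "inv_perron n k E j \<le> lap_form k E ?x"
    by (rule inv_perron_le_lap_form[OF u k])
  then show ?thesis unfolding lap_form_indicator[OF u] c_pow by simp
qed

lemma cut_edges_complement:
  assumes "S \<subseteq> {1..n}"
  shows "cut_edges n E ({1..n} - S) = cut_edges n E S"
proof -
  have "{1..n} - ({1..n} - S) = S" using assms by auto
  then show ?thesis unfolding cut_edges_def by auto
qed

lemma cut_edge_card_split:
  assumes u: "uniform_hypergraph n k E" and e: "e \<in> cut_edges n E S"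
  shows "card (e \<inter> S) + card (e \<inter> ({1..n} - S)) = k"
proof -
  have sub: "e \<subseteq> {1..n}" and "card e = k"
    using u e unfolding uniform_hypergraph_def cut_edges_def by auto
  moreover have "finite e" using sub finite_subset by blast
  moreover have "e = (e \<inter> S) \<union> (e \<inter> ({1..n} - S))" using sub by auto
  moreover have "(e \<inter> S) \<inter> (e \<inter> ({1..n} - S)) = {}" by auto
  ultimately show ?thesis
    using card_Un_disjoint[of "e \<inter> S" "e \<inter> ({1..n} - S)"] by (metis finite_Int)
qed

lemma inv_perron_add_le:
  assumes u: "uniform_hypergraph n k E" and k: "1 \<le> k"
    and S: "S \<subseteq> {1..n}" "S \<noteq> {}" "2 * card S \<le> n"
    and j: "j \<in> {1..n}" "j \<notin> S" and l: "l \<in> S"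
  shows "inv_perron n k E j + inv_perron n k E l
    \<le> real k * real (card (cut_edges n E S)) / real (card S)"
proof -
  define T where "T = {1..n} - S"
  let ?C = "cut_edges n E S"
  have card_pos: "0 < real (card S)" using S finite_subset by fastforce
  have "card T = n - card S" unfolding T_def using S finite_subset[OF S(1)] by (simp add: card_Diff_subset)
  then have card_le: "real (card S) \<le> real (card T)" using S by simp
  have bound_S: "inv_perron n k E j \<le> (\<Sum>e\<in>?C. real (card (e \<inter> S))) / real (card S)"
    by (rule inv_perron_le_cut_sum[OF u k S(1,2) j(2)])
  have "T \<subseteq> {1..n}" "T \<noteq> {}" "l \<notin> T" using j l unfolding T_def by auto
  then have "inv_perron n k E l \<le> (\<Sum>e\<in>cut_edges n E T. real (card (e \<inter> T))) / real (card T)"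
    by (rule inv_perron_le_cut_sum[OF u k])
  also have "\<dots> = (\<Sum>e\<in>?C. real (card (e \<inter> T))) / real (card T)"
    using cut_edges_complement[OF S(1)] unfolding T_def by simp
  also have "\<dots> \<le> (\<Sum>e\<in>?C. real (card (e \<inter> T))) / real (card S)"
    by (rule divide_left_mono) (use card_le card_pos in \<open>auto intro: sum_nonneg\<close>)
  finally have bound_T: "inv_perron n k E l \<le> (\<Sum>e\<in>?C. real (card (e \<inter> T))) / real (card S)" .
  have "inv_perron n k E j + inv_perron n k E l
      \<le> ((\<Sum>e\<in>?C. real (card (e \<inter> S))) + (\<Sum>e\<in>?C. real (card (e \<inter> T)))) / real (card S)"
    using bound_S bound_T by (simp add: add_divide_distrib)
  also have "(\<Sum>e\<in>?C. real (card (e \<inter> S))) + (\<Sum>e\<in>?C. real (card (e \<inter> T))) = (\<Sum>e\<in>?C. real k)"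
    unfolding sum.distrib[symmetric] T_def
    by (intro sum.cong refl) (metis cut_edge_card_split[OF u] of_nat_add)
  finally show ?thesis by (simp add: mult.commute)
qed

lemma analytic_conn_add_beta_le:
  assumes u: "uniform_hypergraph n k E" and k: "1 \<le> k"
    and S: "S \<subseteq> {1..n}" "0 < card S" "2 * card S \<le> n"
  shows "analytic_conn n k E + beta_hg n k E
    \<le> real k * real (card (cut_edges n E S)) / real (card S)"
proof -
  let ?f = "inv_perron n k E"
  have ne: "?f ` {1..n} \<noteq> {}" using S by auto
  obtain m where m: "m \<in> {1..n}" "beta_hg n k E = ?f m"
    using Max_in[OF _ ne] unfolding beta_hg_def by auto
  have alpha_le: "analytic_conn n k E \<le> ?f i" if "i \<in> {1..n}" for i
    unfolding analytic_conn_def using that by (intro Min_le) auto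
  obtain l where l: "l \<in> S" using S(2) by fastforce
  then have S_ne: "S \<noteq> {}" and l_vertex: "l \<in> {1..n}" using S(1) by auto
  have "card S < card {1..n}" using S by simp
  then have "\<not> {1..n} \<subseteq> S" using S(1) by (metis card_mono finite_subset finite_atLeastAtMost leD)
  then obtain j where j: "j \<in> {1..n}" "j \<notin> S" by blast
  show ?thesis
  proof (cases "m \<in> S")
    case True
    then show ?thesis
      using inv_perron_add_le[OF u k S(1) S_ne S(3) j True] alpha_le[OF j(1)] m(2) by linarith
  next
    case False
    then show ?thesis
      using inv_perron_add_le[OF u k S(1) S_ne S(3) m(1) False l] alpha_le[OF l_vertex] m(2)
      by linarith
  qed
qed

theorem theorem3p3:
  fixes n k :: nat and E :: "nat set set"
  assumes "2 \<le> k" and "2 \<le> n"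
    and "uniform_hypergraph n k E"
  shows "isoperimetric n E \<ge> (analytic_conn n k E + beta_hg n k E) / real k"
proof -
  define ratios where "ratios = {real (card (cut_edges n E S)) / real (card S) | S.
      S \<subseteq> {1..n} \<and> 0 < card S \<and> real (card S) \<le> real n / 2}"
  have "finite ratios" unfolding ratios_def
    by (rule finite_image_set) (rule finite_subset[of _ "Pow {1..n}"], auto)
  moreover have "ratios \<noteq> {}"
  proof -
    have "{1} \<subseteq> {1..n} \<and> 0 < card {1::nat} \<and> real (card {1::nat}) \<le> real n / 2"
      using assms(2) by auto
    then show ?thesis unfolding ratios_def by blast
  qed
  moreover have "(analytic_conn n k E + beta_hg n k E) / real k \<le> r" if "r \<in> ratios" for r
  proof -
    obtain S where S: "S \<subseteq> {1..n}" "0 < card S" "real (card S) \<le> real n / 2"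
      and r: "r = real (card (cut_edges n E S)) / real (card S)"
      using \<open>r \<in> ratios\<close> unfolding ratios_def by blast
    then have "2 * card S \<le> n" by linarith
    show ?thesis
      using analytic_conn_add_beta_le[OF assms(3) _ S(1,2) \<open>2 * card S \<le> n\<close>] assms(1) unfolding r
      by (simp add: pos_divide_le_eq mult.commute)
  qed
  ultimately show ?thesis unfolding isoperimetric_def ratios_def[symmetric] by simp
qed

end
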